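(* Let $V\sim\mathrm{Exp}(\lambda)$ with rate $\lambda>0$. For $p_0\ge 0$, $r\in[0,1]$, define $$R(p_0,r)=\mathbb{E}\big[(p_0+rV)\,\mathbb{1}_{\{(1-r)V\ge p_0\}}\big]+p_0\,\Pr\big[(1-r)V<p_0\le V\big].$$ Let $u_c^*=\sup_{p_0\ge0,\,r\in[0,1]}R(p_0,r)$ and $u_{c,r=0}^*=\sup_{p_0\ge 0}p_0\Pr[V>p_0]$. Then $u_c^*=\mathbb{E}[V]=1/\lambda$, $u_{c,r=0}^*=\frac{1}{e\lambda}$, hence $\Delta:=u_c^*-u_{c,r=0}^*=\frac{1}{\lambda}\big(1-\frac1e\big)$, and the relative increase $\mathcal{I}:=\Delta/u_{c,r=0}^*$ equals $e-1\approx 1.72$ for all $\lambda\in(1,\infty)$.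
   Context: $R(p_0,r)$ is the creator's expected revenue when a speculator who observes the realized valuation $v$ buys at price $p_0$ iff $(1-r)v\ge p_0$ and resells at $v$ paying royalty $rv$, and otherwise the creator sells directly to the end-buyer at $p_0$ iff $v\ge p_0$. *)

theory Defs
  imports "HOL-Probability.Probability"
begin

definition creator_revenue :: "'a measure \<Rightarrow> ('a \<Rightarrow> real) \<Rightarrow> real \<Rightarrow> real \<Rightarrow> real" where
  "creator_revenue M V p0 r =
     (\<integral>\<omega>. (p0 + r * V \<omega>) * indicator {\<omega>. (1 - r) * V \<omega> \<ge> p0} \<omega> \<partial>M)
     + p0 * measure M {\<omega> \<in> space M. (1 - r) * V \<omega> < p0 \<and> p0 \<le> V \<omega>}"

end

theory Submission
  imports Defs
begin

text \<open>Whatever the speculator does, the creator's payment from a realisation v \<ge> 0 never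
  exceeds v, so R(p0, r) \<le> E[V]; the pair (p0, r) = (0, 1) extracts exactly E[V].
  Without royalties the creator only earns p0 P[V > p0] = p0 e^(-\<lambda> p0), which by
  x \<le> e^(x - 1) is maximal at p0 = 1/\<lambda> with value 1/(e \<lambda>).\<close>

lemma bdd_above_Sup_eq_maximum:
  fixes S :: "'a :: conditionally_complete_lattice set"
  assumes "m \<in> S" "\<And>x. x \<in> S \<Longrightarrow> x \<le> m"
  shows "bdd_above S \<and> Sup S = m"
  using assms by (metis bdd_aboveI cSup_eq_maximum)

lemma mult_exp_neg_le:
  fixes p l :: real
  assumes "0 < l"
  shows "p * exp (- p * l) \<le> 1 / (exp 1 * l)"
proof -
  have "p * l \<le> exp (p * l - 1)"
    using exp_ge_add_one_self[of "p * l - 1"] by simp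
  then have "p * l * exp (- p * l) \<le> exp (p * l - 1) * exp (- p * l)"
    by (rule mult_right_mono) simp
  also have "\<dots> = 1 / exp 1"
    by (simp add: exp_diff exp_minus field_simps)
  finally show ?thesis
    using assms by (simp add: field_simps)
qed

lemma creator_payment_le_valuation:
  fixes p0 r v :: real
  assumes "0 \<le> p0" "0 \<le> r" "r \<le> 1" "0 \<le> v"
  shows "(p0 + r * v) * indicator {x. (1 - r) * x \<ge> p0} v
      + p0 * indicator {x. (1 - r) * x < p0 \<and> p0 \<le> x} v \<le> v"
  using assms by (auto simp: indicator_def algebra_simps)

lemma creator_revenue_le_expectation:
  fixes V :: "'a \<Rightarrow> real"
  assumes "finite_measure M" "integrable M V" "AE \<omega> in M. 0 \<le> V \<omega>"
    and "0 \<le> p0" "0 \<le> r" "r \<le> 1"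
  shows "creator_revenue M V p0 r \<le> (\<integral>\<omega>. V \<omega> \<partial>M)"
proof -
  interpret finite_measure M by (rule assms(1))
  have [measurable]: "V \<in> borel_measurable M"
    using assms(2) by simp
  define A where "A = {\<omega>. (1 - r) * V \<omega> \<ge> p0}"
  define B where "B = {\<omega> \<in> space M. (1 - r) * V \<omega> < p0 \<and> p0 \<le> V \<omega>}"
  have B_sets: "B \<in> sets M"
    unfolding B_def by measurable
  have integrable_A: "integrable M (\<lambda>\<omega>. (p0 + r * V \<omega>) * indicator A \<omega>)"
  proof (rule Bochner_Integration.integrable_bound)
    show "integrable M (\<lambda>\<omega>. p0 + \<bar>V \<omega>\<bar>)"
      using assms(2) by auto
    show "(\<lambda>\<omega>. (p0 + r * V \<omega>) * indicator A \<omega>) \<in> borel_measurable M"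
      unfolding A_def by measurable
    have "\<bar>p0 + r * v\<bar> \<le> p0 + \<bar>v\<bar>" for v :: real
    proof -
      have "\<bar>r * v\<bar> \<le> \<bar>v\<bar>"
        using assms(5,6) by (simp add: abs_mult mult_left_le_one_le)
      then show ?thesis
        using assms(4) abs_triangle_ineq[of p0 "r * v"] by linarith
    qed
    then show "AE \<omega> in M. norm ((p0 + r * V \<omega>) * indicator A \<omega>) \<le> norm (p0 + \<bar>V \<omega>\<bar>)"
      using assms(4) by (intro AE_I2) (simp add: indicator_def)
  qed
  have integrable_B: "integrable M (\<lambda>\<omega>. p0 * indicator B \<omega>)"
    using B_sets
    by (intro integrable_mult_right integrable_real_indicator) (auto simp: less_top[symmetric])
  have "creator_revenue M V p0 r
      = (\<integral>\<omega>. (p0 + r * V \<omega>) * indicator A \<omega> \<partial>M) + (\<integral>\<omega>. p0 * indicator B \<omega> \<partial>M)"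
    using B_sets by (simp add: creator_revenue_def A_def B_def)
  also have "\<dots> = (\<integral>\<omega>. (p0 + r * V \<omega>) * indicator A \<omega> + p0 * indicator B \<omega> \<partial>M)"
    using integrable_A integrable_B by simp
  also have "\<dots> \<le> (\<integral>\<omega>. V \<omega> \<partial>M)"
  proof (rule integral_mono_AE)
    show "AE \<omega> in M. (p0 + r * V \<omega>) * indicator A \<omega> + p0 * indicator B \<omega> \<le> V \<omega>"
      using assms(3)
    proof (rule AE_mp, intro AE_I2 impI)
      fix \<omega> assume "\<omega> \<in> space M" "0 \<le> V \<omega>"
      then show "(p0 + r * V \<omega>) * indicator A \<omega> + p0 * indicator B \<omega> \<le> V \<omega>"
        using creator_payment_le_valuation[OF assms(4-6), of "V \<omega>"]
        by (simp add: A_def B_def indicator_def)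
    qed
  qed (use integrable_A integrable_B assms(2) in auto)
  finally show ?thesis .
qed

lemma creator_revenue_full_royalty_no_price:
  "creator_revenue M V 0 1 = (\<integral>\<omega>. V \<omega> \<partial>M)"
  by (simp add: creator_revenue_def)

lemma creator_revenue_Sup_eq_expectation:
  fixes V :: "'a \<Rightarrow> real"
  assumes "finite_measure M" "integrable M V" "AE \<omega> in M. 0 \<le> V \<omega>"
  shows "bdd_above ((\<lambda>(p0, r). creator_revenue M V p0 r) ` ({0..} \<times> {0..1}))
    \<and> Sup ((\<lambda>(p0, r). creator_revenue M V p0 r) ` ({0..} \<times> {0..1})) = (\<integral>\<omega>. V \<omega> \<partial>M)"
proof (rule bdd_above_Sup_eq_maximum)
  show "(\<integral>\<omega>. V \<omega> \<partial>M) \<in> (\<lambda>(p0, r). creator_revenue M V p0 r) ` ({0..} \<times> {0..1})"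
    by (rule image_eqI[where x = "(0, 1)"]) (simp_all add: creator_revenue_full_royalty_no_price)
  show "x \<le> (\<integral>\<omega>. V \<omega> \<partial>M)"
    if "x \<in> (\<lambda>(p0, r). creator_revenue M V p0 r) ` ({0..} \<times> {0..1})" for x
    using that creator_revenue_le_expectation[OF assms] by auto
qed

lemma exponential_posted_price_revenue_Sup:
  fixes V :: "'a \<Rightarrow> real" and l :: real
  assumes "prob_space M" "0 < l" "distributed M lborel V (exponential_density l)"
  shows "bdd_above ((\<lambda>p0. p0 * measure M {\<omega> \<in> space M. V \<omega> > p0}) ` {0..})
    \<and> Sup ((\<lambda>p0. p0 * measure M {\<omega> \<in> space M. V \<omega> > p0}) ` {0..}) = 1 / (exp 1 * l)"
proof (rule bdd_above_Sup_eq_maximum)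
  interpret prob_space M by (rule assms(1))
  have survival: "measure M {\<omega> \<in> space M. V \<omega> > p} = exp (- p * l)" if "0 \<le> p" for p
    using exponential_distributedD_gt[OF assms(3) that assms(2)] by simp
  show "1 / (exp 1 * l) \<in> (\<lambda>p0. p0 * measure M {\<omega> \<in> space M. V \<omega> > p0}) ` {0..}"
    using assms(2) survival[of "1 / l"]
    by (intro image_eqI[where x = "1 / l"]) (simp_all add: exp_minus field_simps)
  show "x \<le> 1 / (exp 1 * l)"
    if "x \<in> (\<lambda>p0. p0 * measure M {\<omega> \<in> space M. V \<omega> > p0}) ` {0..}" for x
    using that survival mult_exp_neg_le[OF assms(2)] by auto
qed

theorem lemma4:
  fixes M :: "'a measure" and V :: "'a \<Rightarrow> real" and l :: real
  assumes "prob_space M"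
    and "l > 0"
    and "distributed M lborel V (exponential_density l)"
  defines "uc \<equiv> Sup ((\<lambda>(p0, r). creator_revenue M V p0 r) ` ({0..} \<times> {0..1}))"
    and "uc0 \<equiv> Sup ((\<lambda>p0. p0 * measure M {\<omega> \<in> space M. V \<omega> > p0}) ` {0..})"
  shows "bdd_above ((\<lambda>(p0, r). creator_revenue M V p0 r) ` ({0..} \<times> {0..1}))
    \<and> bdd_above ((\<lambda>p0. p0 * measure M {\<omega> \<in> space M. V \<omega> > p0}) ` {0..})
    \<and> uc = (\<integral>\<omega>. V \<omega> \<partial>M) \<and> (\<integral>\<omega>. V \<omega> \<partial>M) = 1 / l
    \<and> uc0 = 1 / (exp 1 * l)
    \<and> uc - uc0 = (1 / l) * (1 - 1 / exp 1)
    \<and> (l > 1 \<longrightarrow> (uc - uc0) / uc0 = exp 1 - 1)"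
proof -
  interpret prob_space M by (rule assms(1))
  have integrable_V: "integrable M V"
    using erlang_ith_moment_integrable[OF assms(2,3), of 1] by simp
  have V_nonneg: "AE \<omega> in M. 0 \<le> V \<omega>"
    by (subst distributed_AE2[OF assms(3)]) (auto simp: erlang_density_def)
  have EV: "(\<integral>\<omega>. V \<omega> \<partial>M) = 1 / l"
    using exponential_distributed_expectation[OF assms(2,3)] by simp
  note uc = creator_revenue_Sup_eq_expectation[OF finite_measure_axioms integrable_V V_nonneg]
  note uc0 = exponential_posted_price_revenue_Sup[OF assms(1-3)]
  have "1 / l - 1 / (exp 1 * l) = (1 / l) * (1 - 1 / exp 1)"
    using assms(2) by (simp add: field_simps)
  moreover have "(1 / l - 1 / (exp 1 * l)) / (1 / (exp 1 * l)) = exp 1 - 1"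
    using assms(2) by (simp add: field_simps)
  ultimately show ?thesis
    using uc uc0 EV assms(2) unfolding uc_def uc0_def by simp
qed

end
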